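(* Let $p\ge2$, $K\ge1$ be integers, $s_1\ge0$ an integer, $s_2,\dots,s_p\in\mathbb{Z}$, and $z_1,\dots,z_p$ complex numbers of modulus $<1$. Then $$\mathrm{La}^K_{-s_1,s_2,\dots,s_p}(z_1,\dots,z_p)=P_{s_1}(K,z_1)\,\mathrm{La}^K_{s_2,\dots,s_p}(z_2,\dots,z_p)-\sum_{\ell=0}^{s_1}\frac{a_{1,\ell}(s_1,z_1)}{(1-z_1)^{s_1+1}z_1}\sum_{m=0}^{\ell}\binom{\ell}{m}(-1)^{\ell-m}\mathrm{La}^K_{s_2-m,s_3,\dots,s_p}(z_1z_2,z_3,\dots,z_p)$$ $$-\sum_{\ell=0}^{s_1}\frac{a_{2,\ell}(s_1,z_1)}{(1-z_1)^{s_1+1}}\sum_{m=0}^{\ell}\binom{\ell}{m}(-1)^{\ell-m}\mathrm{La}^K_{s_2-m,s_3,\dots,s_p}(z_2,\dots,z_p).$$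
   Context: Truncated large polylogarithm: $\mathrm{La}^K_{t_1,\dots,t_r}(w_1,\dots,w_r)=\sum_{K\ge k_1\ge\cdots\ge k_r\ge1}\frac{w_1^{k_1}\cdots w_r^{k_r}}{k_1^{t_1}\cdots k_r^{t_r}}$ (equal to $1$ when $r=0$). For $s\ge0$ and $K\ge0$, $P_s(K,z)=\sum_{k=1}^Kk^sz^k=\big(z\frac{d}{dz}\big)^s\big(z\frac{1-z^K}{1-z}\big)$, and $a_{1,\ell}(s,z),a_{2,\ell}(s,z)$ ($0\le\ell\le s$) are the polynomials in $z$, independent of $K$, such that $P_s(K,z)=\sum_{\ell=0}^s\frac{z^Ka_{1,\ell}(s,z)+a_{2,\ell}(s,z)}{(1-z)^{s+1}}K^\ell$ for all $K\ge0$ (with $0^0=1$); $a_{1,\ell}(s,z)$ is divisible by $z$. *)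

theory Defs
  imports Complex_Main "HOL-Computational_Algebra.Polynomial"
begin

text \<open>Truncated large polylogarithm La^K_{t_1..t_r}(w_1..w_r), with the sum over
  K >= k_1 >= ... >= k_r >= 1, computed by peeling off the outermost index k_1. Lists of different lengths are not used.\<close>
fun La :: "nat \<Rightarrow> int list \<Rightarrow> complex list \<Rightarrow> complex" where
  "La K [] [] = 1"
| "La K (t # ts) (w # ws) =
     (\<Sum>k = 1..K. w ^ k / (of_nat k powi t) * La k ts ws)"
| "La K _ _ = 0"

definition Ps :: "nat \<Rightarrow> nat \<Rightarrow> complex \<Rightarrow> complex" where
  "Ps s K z = (\<Sum>k = 1..K. of_nat k ^ s * z ^ k)"

definition a12 :: "nat \<Rightarrow> (nat \<Rightarrow> complex poly) \<times> (nat \<Rightarrow> complex poly)" where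
  "a12 s = (THE (A1, A2).
      (\<forall>l>s. A1 l = 0 \<and> A2 l = 0) \<and>
      (\<forall>l. [:0, 1:] dvd A1 l) \<and>
      (\<forall>K z. z \<noteq> 1 \<longrightarrow>
          Ps s K z = (\<Sum>l\<le>s. (z ^ K * poly (A1 l) z + poly (A2 l) z) / (1 - z) ^ (s + 1)
                                * of_nat K ^ l)))"

definition a1 :: "nat \<Rightarrow> nat \<Rightarrow> complex poly" where
  "a1 s l = fst (a12 s) l"

definition a2 :: "nat \<Rightarrow> nat \<Rightarrow> complex poly" where
  "a2 s l = snd (a12 s) l"

end

theory Submission
  imports Defs "HOL-Computational_Algebra.Fundamental_Theorem_Algebra"
begin

(* With g j = z2^j / j^s2 * La_j(...), the outermost summand of the left-hand side is
   k^n z1^k (g 1 + ... + g k), n = s1.  Summation by parts gives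
   P_n(K,z1) La_{s2,...} - sum_j g j P_n(j-1,z1).  Now expand
   P_n(j-1,z) = sum_l (z^j a1_l(z)/z + a2_l(z)) / (1-z)^(n+1) (j-1)^l and (j-1)^l by the
   binomial theorem: the factors z1^j j^m are absorbed into g j, lowering the exponent s2 to s2-m
   and turning z2 into z1 z2.
   Since a1, a2 are given by a definite description, the expansion of P_s must be shown to exist
   and to be unique.  Existence is by strong induction on s, from the recurrence expressing
   (1-z) P_s through P_0, ..., P_(s-1).  Uniqueness holds because for 0 < z < 1 the sequences
   n^l z^n and n^l are linearly independent, so the coefficient polynomials agree on (0,1). *)

lemma Ps_telescoping:
  "(1 - z) * Ps s K z
     = 0 ^ s * z + (\<Sum>k=1..K. (of_nat k ^ s - (of_nat k - 1) ^ s) * z ^ k)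
       - of_nat K ^ s * z ^ (K + 1)"
  by (induction K) (simp_all add: Ps_def algebra_simps)

lemma Ps_recurrence:
  "(1 - z) * Ps s K z = 0 ^ s * z - (\<Sum>j<s. of_nat (s choose j) * (-1) ^ (s - j) * Ps j K z)
     - of_nat K ^ s * z ^ (K + 1)"
proof -
  have "of_nat k ^ s - (of_nat k - 1) ^ s
      = - (\<Sum>j<s. of_nat (s choose j) * (-1) ^ (s - j) * of_nat k ^ j :: complex)" for k :: nat
    using binomial_ring[of "of_nat k :: complex" "-1" s]
    by (simp add: lessThan_Suc_atMost[symmetric] mult_ac)
  then have "(\<Sum>k=1..K. (of_nat k ^ s - (of_nat k - 1) ^ s) * z ^ k)
      = - (\<Sum>j<s. of_nat (s choose j) * (-1) ^ (s - j) * Ps j K z)"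
    by (simp add: Ps_def sum_distrib_left sum_distrib_right sum_negf mult_ac
        flip: sum.swap[of _ "{..<s}"])
  then show ?thesis by (simp add: Ps_telescoping)
qed

definition is_Ps_expansion ::
    "nat \<Rightarrow> (nat \<Rightarrow> complex poly) \<Rightarrow> (nat \<Rightarrow> complex poly) \<Rightarrow> bool" where
  "is_Ps_expansion s A1 A2 \<longleftrightarrow>
     (\<forall>l>s. A1 l = 0 \<and> A2 l = 0) \<and> (\<forall>l. [:0, 1:] dvd A1 l) \<and>
     (\<forall>K z. z \<noteq> 1 \<longrightarrow>
        (1 - z) ^ (s + 1) * Ps s K z
          = (\<Sum>l\<le>s. (z ^ K * poly (A1 l) z + poly (A2 l) z) * of_nat K ^ l))"

lemma is_Ps_expansion_identity:
  assumes "is_Ps_expansion j A1 A2" "j \<le> s" "z \<noteq> 1"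
  shows "(1 - z) ^ (j + 1) * Ps j K z = (\<Sum>l\<le>s. (z ^ K * poly (A1 l) z + poly (A2 l) z) * of_nat K ^ l)"
proof -
  have "(1 - z) ^ (j + 1) * Ps j K z = (\<Sum>l\<le>j. (z ^ K * poly (A1 l) z + poly (A2 l) z) * of_nat K ^ l)"
    using assms by (simp add: is_Ps_expansion_def)
  also have "\<dots> = (\<Sum>l\<le>s. (z ^ K * poly (A1 l) z + poly (A2 l) z) * of_nat K ^ l)"
    using assms by (intro sum.mono_neutral_left) (auto simp: is_Ps_expansion_def)
  finally show ?thesis .
qed

lemma is_Ps_expansion_linear_combination:
  fixes c :: "nat \<Rightarrow> complex"
  assumes A: "\<And>j. j < s \<Longrightarrow> is_Ps_expansion j (A1 j) (A2 j)" and "z \<noteq> 1"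
  shows "(\<Sum>l\<le>s. (z ^ K * poly (\<Sum>j<s. smult (c j) ([:1, -1:] ^ (s - Suc j) * A1 j l)) z
                 + poly (\<Sum>j<s. smult (c j) ([:1, -1:] ^ (s - Suc j) * A2 j l)) z) * of_nat K ^ l)
       = (1 - z) ^ s * (\<Sum>j<s. c j * Ps j K z)"
proof -
  have "(\<Sum>l\<le>s. (z ^ K * poly (\<Sum>j<s. smult (c j) ([:1, -1:] ^ (s - Suc j) * A1 j l)) z
                 + poly (\<Sum>j<s. smult (c j) ([:1, -1:] ^ (s - Suc j) * A2 j l)) z) * of_nat K ^ l)
      = (\<Sum>j<s. c j * (1 - z) ^ (s - Suc j)
                 * (\<Sum>l\<le>s. (z ^ K * poly (A1 j l) z + poly (A2 j l) z) * of_nat K ^ l))"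
    by (simp add: poly_sum sum_distrib_left sum_distrib_right sum.distrib algebra_simps
        flip: sum.swap[of _ "{..<s}"])
  also have "\<dots> = (\<Sum>j<s. c j * ((1 - z) ^ (s - Suc j) * (1 - z) ^ (j + 1)) * Ps j K z)"
  proof (intro sum.cong refl)
    fix j assume "j \<in> {..<s}"
    then have "(\<Sum>l\<le>s. (z ^ K * poly (A1 j l) z + poly (A2 j l) z) * of_nat K ^ l)
        = (1 - z) ^ (j + 1) * Ps j K z"
      using is_Ps_expansion_identity[OF A _ \<open>z \<noteq> 1\<close>, of j s K] by simp
    then show "c j * (1 - z) ^ (s - Suc j)
                 * (\<Sum>l\<le>s. (z ^ K * poly (A1 j l) z + poly (A2 j l) z) * of_nat K ^ l)
        = c j * ((1 - z) ^ (s - Suc j) * (1 - z) ^ (j + 1)) * Ps j K z"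
      by (simp only: mult.assoc)
  qed
  also have "\<dots> = (1 - z) ^ s * (\<Sum>j<s. c j * Ps j K z)"
  proof -
    have "(1 - z) ^ (s - Suc j) * (1 - z) ^ (j + 1) = (1 - z) ^ s" if "j < s" for j
      using that by (simp only: power_add [symmetric]) simp
    then show ?thesis
      by (auto simp: sum_distrib_left mult_ac intro!: sum.cong)
  qed
  finally show ?thesis .
qed

lemma is_Ps_expansion_exists: "\<exists>A1 A2. is_Ps_expansion s A1 A2"
proof (induction s rule: less_induct)
  case (less s)
  then obtain A1 A2 where A: "\<And>j. j < s \<Longrightarrow> is_Ps_expansion j (A1 j) (A2 j)"
    by metis
  (* Multiply Ps_recurrence by (1 - z)^s and insert the expansion of each P_j, j < s,
     scaled by (1 - z)^(s - 1 - j). *)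
  define c :: "nat \<Rightarrow> complex" where "c j = of_nat (s choose j) * (-1) ^ (s - j)" for j
  define C1 where "C1 l = (\<Sum>j<s. smult (c j) ([:1, -1:] ^ (s - Suc j) * A1 j l))" for l
  define C2 where "C2 l = (\<Sum>j<s. smult (c j) ([:1, -1:] ^ (s - Suc j) * A2 j l))" for l
  define B1 where "B1 l = - C1 l - (if l = s then [:1, -1:] ^ s * [:0, 1:] else 0)" for l
  define B2 where "B2 l = - C2 l + (if l = 0 then [:0, 0 ^ s:] else 0)" for l
  have "B1 l = 0 \<and> B2 l = 0" if "s < l" for l
    using A that by (simp add: B1_def B2_def C1_def C2_def is_Ps_expansion_def)
  moreover have "[:0, 1:] dvd B1 l" for l
  proof -
    have x_dvd_iff: "[:0, 1:] dvd p \<longleftrightarrow> poly p 0 = 0" for p :: "complex poly"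
      using poly_eq_0_iff_dvd[of p 0] by simp
    show ?thesis
      using A by (simp add: x_dvd_iff B1_def C1_def is_Ps_expansion_def poly_sum)
  qed
  moreover have "(1 - z) ^ (s + 1) * Ps s K z
      = (\<Sum>l\<le>s. (z ^ K * poly (B1 l) z + poly (B2 l) z) * of_nat K ^ l)" if "z \<noteq> 1" for K z
  proof -
    have "(\<Sum>l\<le>s. (z ^ K * poly (B1 l) z + poly (B2 l) z) * of_nat K ^ l)
        = (\<Sum>l\<le>s. - ((z ^ K * poly (C1 l) z + poly (C2 l) z) * of_nat K ^ l)
            - (if l = s then (1 - z) ^ s * z ^ (K + 1) * of_nat K ^ s else 0)
            + (if l = 0 then 0 ^ s * z else 0))"
      by (intro sum.cong refl) (simp add: B1_def B2_def algebra_simps)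
    also have "\<dots> = - (\<Sum>l\<le>s. (z ^ K * poly (C1 l) z + poly (C2 l) z) * of_nat K ^ l)
          - (1 - z) ^ s * z ^ (K + 1) * of_nat K ^ s + 0 ^ s * z"
      by (simp add: sum.distrib sum_subtractf sum_negf)
    also have "\<dots> = - ((1 - z) ^ s * (\<Sum>j<s. c j * Ps j K z))
          - (1 - z) ^ s * z ^ (K + 1) * of_nat K ^ s + 0 ^ s * z"
      unfolding C1_def C2_def
      by (simp only:
          is_Ps_expansion_linear_combination[where s=s and ?A1.0=A1 and ?A2.0=A2, OF A that])
    also have "\<dots>
        = (1 - z) ^ s * (0 ^ s * z - (\<Sum>j<s. c j * Ps j K z) - of_nat K ^ s * z ^ (K + 1))"
      by (cases s) (simp_all add: algebra_simps)
    also have "\<dots> = (1 - z) ^ s * ((1 - z) * Ps s K z)"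
      by (simp add: Ps_recurrence c_def)
    finally show ?thesis by simp
  qed
  ultimately have "is_Ps_expansion s B1 B2"
    by (auto simp: is_Ps_expansion_def)
  then show ?case by blast
qed

lemma real_power_mult_power_tendsto_zero:
  fixes r :: real
  assumes "0 \<le> r" "r < 1"
  shows "(\<lambda>n. real n ^ l * r ^ n) \<longlonglongrightarrow> 0"
proof (cases "l = 0")
  case True
  then show ?thesis using LIMSEQ_power_zero[of r] assms by simp
next
  case False
  define \<rho> where "\<rho> = root l r"
  have "0 \<le> \<rho>" "\<rho> < 1" "\<rho> ^ l = r"
    using False assms by (simp_all add: \<rho>_def real_root_ge_zero)
  then have "(\<lambda>n. (real n * \<rho> ^ n) ^ l) \<longlonglongrightarrow> 0 ^ l"
    by (intro tendsto_power powser_times_n_limit_0) simp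
  moreover have "(real n * \<rho> ^ n) ^ l = real n ^ l * r ^ n" for n
    using \<open>\<rho> ^ l = r\<close>
    by (simp add: power_mult_distrib flip: power_mult) (simp add: mult.commute power_mult)
  ultimately show ?thesis using False by (simp add: zero_power)
qed

lemma poly_of_nat_mult_power_tendsto_zero:
  fixes p :: "complex poly"
  assumes "norm z < 1"
  shows "(\<lambda>n. poly p (of_nat n) * z ^ n) \<longlonglongrightarrow> 0"
proof -
  have "(\<lambda>n. of_nat n ^ i * z ^ n) \<longlonglongrightarrow> 0" for i
  proof (rule tendsto_norm_zero_cancel)
    show "(\<lambda>n. norm (of_nat n ^ i * z ^ n)) \<longlonglongrightarrow> 0"
      using real_power_mult_power_tendsto_zero[of "norm z" i] assms
      by (simp add: norm_mult norm_power)
  qed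
  then have "(\<lambda>n. \<Sum>i\<le>degree p. coeff p i * (of_nat n ^ i * z ^ n)) \<longlonglongrightarrow> 0"
    by (intro tendsto_null_sum tendsto_mult_right_zero)
  then show ?thesis by (simp add: poly_altdef sum_distrib_right mult.assoc)
qed

lemma poly_eq_0_if_of_nat_tendsto_zero:
  fixes p :: "complex poly"
  assumes "(\<lambda>n. poly p (of_nat n)) \<longlonglongrightarrow> 0"
  shows "p = 0"
proof (cases p)
  case (pCons a q)
  show ?thesis
  proof (cases "q = 0")
    case True
    then show ?thesis using assms pCons by (simp add: LIMSEQ_const_iff)
  next
    case False
    then obtain r where "\<forall>x. r \<le> norm x \<longrightarrow> 1 \<le> norm (poly (pCons a q) x)"
      using poly_infinity by blast
    then have "eventually (\<lambda>n. 1 \<le> norm (poly p (of_nat n))) sequentially"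
      using eventually_ge_at_top[of "nat \<lceil>r\<rceil>"] pCons
      by (auto elim!: eventually_mono simp: of_nat_ceiling le_nat_iff)
    moreover have "eventually (\<lambda>n. norm (poly p (of_nat n)) < 1) sequentially"
      using assms by (auto simp: tendsto_iff dist_norm)
    ultimately have "eventually (\<lambda>_. False) sequentially"
      by eventually_elim simp
    then show ?thesis by simp
  qed
qed

lemma power_mult_poly_add_poly_eq_0_imp_eq_0:
  fixes A B :: "complex poly"
  assumes "z \<noteq> 0" "norm z < 1"
    and "\<And>n. z ^ n * poly A (of_nat n) + poly B (of_nat n) = 0"
  shows "A = 0" "B = 0"
proof -
  have "(\<lambda>n. - (poly A (of_nat n) * z ^ n)) \<longlonglongrightarrow> 0"
    using tendsto_minus[OF poly_of_nat_mult_power_tendsto_zero[OF assms(2)]] by simp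
  moreover have "- (poly A (of_nat n) * z ^ n) = poly B (of_nat n)" for n
    using assms(3)[of n] by (simp add: add_eq_0_iff2 mult.commute)
  ultimately show "B = 0" by (simp add: poly_eq_0_if_of_nat_tendsto_zero)
  then have "poly A (of_nat n) = 0" for n
    using assms(1) assms(3)[of n] by simp
  then show "A = 0" by (simp add: poly_eq_0_if_of_nat_tendsto_zero)
qed

lemma poly_eq_0_if_zero_on_unit_interval:
  fixes p :: "complex poly"
  assumes "\<And>x. 0 < x \<Longrightarrow> x < 1 \<Longrightarrow> poly p (of_real x) = 0"
  shows "p = 0"
proof (rule ccontr)
  assume "p \<noteq> 0"
  have "of_real ` {0<..<1} \<subseteq> {x. poly p x = 0}"
    using assms by auto
  then have "finite (of_real ` {0<..<1::real} :: complex set)"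
    using poly_roots_finite[OF \<open>p \<noteq> 0\<close>] finite_subset by blast
  then show False
    using finite_imageD[of "of_real :: real \<Rightarrow> complex" "{0<..<1}"]
      infinite_Ioo[of "0::real" 1]
    by (simp add: inj_on_def)
qed

lemma is_Ps_expansion_unique:
  assumes A: "is_Ps_expansion s A1 A2" and B: "is_Ps_expansion s B1 B2"
  shows "A1 = B1 \<and> A2 = B2"
proof -
  have "poly (A1 l - B1 l) (of_real x) = 0 \<and> poly (A2 l - B2 l) (of_real x) = 0"
    if "l \<le> s" "0 < x" "x < 1" for l x
  proof -
    define z :: complex where "z = of_real x"
    define D1 where "D1 = (\<Sum>i\<le>s. monom (poly (A1 i - B1 i) z) i)"
    define D2 where "D2 = (\<Sum>i\<le>s. monom (poly (A2 i - B2 i) z) i)"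
    have "z \<noteq> 0" "norm z < 1"
      using that by (simp_all add: z_def)
    moreover have "z ^ n * poly D1 (of_nat n) + poly D2 (of_nat n) = 0" for n
    proof -
      have "z \<noteq> 1"
        using \<open>norm z < 1\<close> by auto
      have "z ^ n * poly D1 (of_nat n) + poly D2 (of_nat n)
          = (\<Sum>i\<le>s. (z ^ n * poly (A1 i) z + poly (A2 i) z) * of_nat n ^ i)
            - (\<Sum>i\<le>s. (z ^ n * poly (B1 i) z + poly (B2 i) z) * of_nat n ^ i)"
        by (simp add: D1_def D2_def poly_sum poly_monom sum_distrib_left sum_distrib_right
            sum_subtractf sum.distrib algebra_simps)
      also have "\<dots> = 0"
        using is_Ps_expansion_identity[OF A order.refl \<open>z \<noteq> 1\<close>, of n]
          is_Ps_expansion_identity[OF B order.refl \<open>z \<noteq> 1\<close>, of n]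
        by (metis diff_self)
      finally show ?thesis .
    qed
    ultimately have "D1 = 0" "D2 = 0"
      by (rule power_mult_poly_add_poly_eq_0_imp_eq_0)+
    then have "coeff D1 l = 0" "coeff D2 l = 0"
      by simp_all
    then show ?thesis
      using \<open>l \<le> s\<close> by (simp add: D1_def D2_def coeff_sum_monom z_def)
  qed
  then have "A1 l = B1 l \<and> A2 l = B2 l" if "l \<le> s" for l
    using that poly_eq_0_if_zero_on_unit_interval[of "A1 l - B1 l"]
      poly_eq_0_if_zero_on_unit_interval[of "A2 l - B2 l"] by simp
  moreover have "A1 l = B1 l \<and> A2 l = B2 l" if "s < l" for l
    using A B that by (simp add: is_Ps_expansion_def)
  ultimately show ?thesis
    by (metis ext not_le)
qed

lemma eq_sum_divide_iff_mult_eq: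
  fixes P d :: "'a::field"
  assumes "d \<noteq> 0"
  shows "P = (\<Sum>l\<in>L. X l / d * Y l) \<longleftrightarrow> d * P = (\<Sum>l\<in>L. X l * Y l)"
proof -
  have "(\<Sum>l\<in>L. X l / d * Y l) = (\<Sum>l\<in>L. X l * Y l) / d"
    by (simp add: sum_divide_distrib)
  then show ?thesis
    using assms by (metis nonzero_eq_divide_eq mult.commute)
qed

lemma a12_eq_The_is_Ps_expansion: "a12 s = (THE (A1, A2). is_Ps_expansion s A1 A2)"
proof -
  have div_iff:
    "(\<forall>K z. z \<noteq> 1 \<longrightarrow> Ps s K z = (\<Sum>l\<le>s. X K z l / (1 - z) ^ (s + 1) * of_nat K ^ l))
      \<longleftrightarrow> (\<forall>K z. z \<noteq> 1 \<longrightarrow>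
            (1 - z) ^ (s + 1) * Ps s K z = (\<Sum>l\<le>s. X K z l * of_nat K ^ l))" for X
  proof -
    have "Ps s K z = (\<Sum>l\<le>s. X K z l / (1 - z) ^ (s + 1) * of_nat K ^ l)
        \<longleftrightarrow> (1 - z) ^ (s + 1) * Ps s K z = (\<Sum>l\<le>s. X K z l * of_nat K ^ l)" if "z \<noteq> 1" for K z
      using that by (intro eq_sum_divide_iff_mult_eq) simp
    then show ?thesis
      by blast
  qed
  show ?thesis
    unfolding a12_def is_Ps_expansion_def by (simp only: div_iff)
qed

lemma is_Ps_expansion_a1_a2: "is_Ps_expansion s (a1 s) (a2 s)"
proof -
  have "\<exists>!A. case A of (A1, A2) \<Rightarrow> is_Ps_expansion s A1 A2"
    using is_Ps_expansion_exists[of s] is_Ps_expansion_unique[of s] by (auto intro!: ex1I)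
  then have "case a12 s of (A1, A2) \<Rightarrow> is_Ps_expansion s A1 A2"
    unfolding a12_eq_The_is_Ps_expansion by (rule theI')
  then show ?thesis
    by (simp add: a1_def[abs_def] a2_def[abs_def] case_prod_beta)
qed

lemma Ps_eq_a1_a2_expansion:
  assumes "z \<noteq> 1"
  shows "Ps s K z = (\<Sum>l\<le>s. (z ^ (K + 1) * poly (a1 s l div [:0, 1:]) z + poly (a2 s l) z)
                             / (1 - z) ^ (s + 1) * of_nat K ^ l)"
proof -
  have "poly (a1 s l) z = z * poly (a1 s l div [:0, 1:]) z" for l
  proof -
    have "[:0, 1:] dvd a1 s l"
      using is_Ps_expansion_a1_a2[of s] by (simp add: is_Ps_expansion_def)
    then have "poly (a1 s l) z = poly ([:0, 1:] * (a1 s l div [:0, 1:])) z"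
      by (simp only: dvd_mult_div_cancel)
    then show ?thesis
      by simp
  qed
  then have expansion: "(1 - z) ^ (s + 1) * Ps s K z
      = (\<Sum>l\<le>s. (z ^ (K + 1) * poly (a1 s l div [:0, 1:]) z + poly (a2 s l) z) * of_nat K ^ l)"
    using is_Ps_expansion_identity[OF is_Ps_expansion_a1_a2 order.refl assms, of s K]
    by (simp add: mult_ac)
  show ?thesis
    using assms expansion by (intro eq_sum_divide_iff_mult_eq[THEN iffD2]) simp_all
qed

lemma Ps_minus_one_expansion:
  assumes "z \<noteq> 1" "1 \<le> j"
  shows "Ps s (j - 1) z = (\<Sum>l\<le>s. (z ^ j * poly (a1 s l div [:0, 1:]) z + poly (a2 s l) z)
            / (1 - z) ^ (s + 1) * (\<Sum>m\<le>l. of_nat (l choose m) * (-1) ^ (l - m) * of_nat j ^ m))"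
proof -
  have "of_nat (j - 1) ^ l
      = (\<Sum>m\<le>l. of_nat (l choose m) * (-1) ^ (l - m) * of_nat j ^ m :: complex)" for l
    using binomial_ring[of "of_nat j :: complex" "-1" l] assms(2) by (simp add: of_nat_diff mult_ac)
  then show ?thesis
    using Ps_eq_a1_a2_expansion[OF assms(1), of s "j - 1"] assms(2) by simp
qed

lemma sum_mult_partial_sums:
  fixes a g :: "nat \<Rightarrow> 'a::comm_ring"
  shows "(\<Sum>k=1..K. a k * (\<Sum>j=1..k. g j))
    = (\<Sum>k=1..K. a k) * (\<Sum>j=1..K. g j) - (\<Sum>j=1..K. g j * (\<Sum>k=1..j-1. a k))"
  by (induction K) (simp_all add: algebra_simps)

lemma La_Cons_mult_power:
  "La K ((t - int m) # ts) ((u * w) # ws)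
    = (\<Sum>j=1..K. u ^ j * of_nat j ^ m * (w ^ j / of_nat j powi t * La j ts ws))"
proof -
  have "(u * w) ^ j / of_nat j powi (t - int m) = u ^ j * of_nat j ^ m * (w ^ j / of_nat j powi t)"
    if "1 \<le> j" for j
    using that by (simp add: power_int_diff power_mult_distrib field_simps)
  then show ?thesis
    by (auto intro!: sum.cong)
qed

lemma La_neg_first_exponent:
  assumes "u \<noteq> 1"
  shows "La K (- int n # t # ts) (u # w # ws) =
      Ps n K u * La K (t # ts) (w # ws)
    - (\<Sum>l\<le>n. poly (a1 n l div [:0, 1:]) u / (1 - u) ^ (n + 1)
         * (\<Sum>m\<le>l. of_nat (l choose m) * (-1) ^ (l - m) * La K ((t - int m) # ts) ((u * w) # ws)))
    - (\<Sum>l\<le>n. poly (a2 n l) u / (1 - u) ^ (n + 1)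
         * (\<Sum>m\<le>l. of_nat (l choose m) * (-1) ^ (l - m) * La K ((t - int m) # ts) (w # ws)))"
proof -
  define g where "g j = w ^ j / of_nat j powi t * La j ts ws" for j
  define c :: "nat \<Rightarrow> nat \<Rightarrow> complex"
    where "c l m = of_nat (l choose m) * (-1) ^ (l - m)" for l m
  define q where "q l = poly (a1 n l div [:0, 1:]) u / (1 - u) ^ (n + 1)" for l
  define b where "b l = poly (a2 n l) u / (1 - u) ^ (n + 1)" for l
  have "La K (- int n # t # ts) (u # w # ws)
      = (\<Sum>k=1..K. of_nat k ^ n * u ^ k * (\<Sum>j=1..k. g j))"
    by (simp add: g_def power_int_minus divide_inverse mult_ac)
  also have "\<dots> = Ps n K u * La K (t # ts) (w # ws) - (\<Sum>j=1..K. g j * Ps n (j - 1) u)"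
    by (subst sum_mult_partial_sums) (simp add: Ps_def g_def)
  also have "(\<Sum>j=1..K. g j * Ps n (j - 1) u)
      = (\<Sum>j=1..K. \<Sum>l\<le>n. (u ^ j * q l + b l) * (\<Sum>m\<le>l. c l m * of_nat j ^ m) * g j)"
    using Ps_minus_one_expansion[OF assms]
    by (auto intro!: sum.cong simp: q_def b_def c_def add_divide_distrib sum_distrib_left
        sum_distrib_right mult_ac)
  also have "\<dots> = (\<Sum>l\<le>n. q l * (\<Sum>m\<le>l. c l m * (\<Sum>j=1..K. u ^ j * of_nat j ^ m * g j)))
      + (\<Sum>l\<le>n. b l * (\<Sum>m\<le>l. c l m * (\<Sum>j=1..K. of_nat j ^ m * g j)))"
    by (simp add: sum_distrib_left sum_distrib_right sum.distrib algebra_simps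
        sum.swap[of _ "{Suc 0..K}"])
  moreover have "La K ((t - int m) # ts) ((u * w) # ws) = (\<Sum>j=1..K. u ^ j * of_nat j ^ m * g j)"
    for m
    unfolding g_def by (rule La_Cons_mult_power)
  moreover have "La K ((t - int m) # ts) (w # ws) = (\<Sum>j=1..K. of_nat j ^ m * g j)" for m
    using La_Cons_mult_power[of K t m ts 1 w ws] by (simp add: g_def)
  ultimately show ?thesis
    unfolding q_def[symmetric] b_def[symmetric] c_def[symmetric] by (simp only: diff_diff_eq)
qed

theorem mainTheorem9:
  fixes p K :: nat and s :: "nat \<Rightarrow> int" and z :: "nat \<Rightarrow> complex"
  assumes "p \<ge> 2" and "K \<ge> 1" and "s 1 \<ge> 0"
    and "\<forall>i \<in> {1..p}. norm (z i) < 1"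
  shows "La K ((- s 1) # map s [2..<p+1]) (map z [1..<p+1]) =
      Ps (nat (s 1)) K (z 1) * La K (map s [2..<p+1]) (map z [2..<p+1])
    - (\<Sum>l\<le>nat (s 1). poly (a1 (nat (s 1)) l div [:0, 1:]) (z 1) / (1 - z 1) ^ (nat (s 1) + 1)
         * (\<Sum>m\<le>l. of_nat (l choose m) * (-1) ^ (l - m)
              * La K ((s 2 - int m) # map s [3..<p+1]) ((z 1 * z 2) # map z [3..<p+1])))
    - (\<Sum>l\<le>nat (s 1). poly (a2 (nat (s 1)) l) (z 1) / (1 - z 1) ^ (nat (s 1) + 1)
         * (\<Sum>m\<le>l. of_nat (l choose m) * (-1) ^ (l - m)
              * La K ((s 2 - int m) # map s [3..<p+1]) (map z [2..<p+1])))"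
proof -
  have s1: "s 1 = int (nat (s 1))"
    using assms(3) by simp
  have upt: "[2..<p+1] = 2 # [3..<p+1]" "[1..<p+1] = 1 # 2 # [3..<p+1]"
    using assms(1) by (simp_all add: upt_conv_Cons numeral_3_eq_3)
  have "norm (z 1) < 1"
    using assms(1,4) by simp
  then have "z 1 \<noteq> 1"
    by auto
  from La_neg_first_exponent[OF this, of K "nat (s 1)" "s 2" "map s [3..<p+1]" "z 2"
      "map z [3..<p+1]"]
  show ?thesis
    unfolding upt list.map by (simp only: flip: s1)
qed

end
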